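(* Let $X$, $Y$ be disjoint sets of cardinality at least two, and let $M\le\mathrm{Sym}(X)$ and $N\le\mathrm{Sym}(Y)$ be nontrivial permutation groups. Then $M\boxtimes N$ is subdegree-finite if and only if $M$ is subdegree-finite and all orbits of $N$ are finite.
   Context: A permutation group is subdegree-finite if every orbit of every point stabiliser is finite. Let $T$ be the $(|X|,|Y|)$-biregular tree with natural bipartition $VT=V_X\sqcup V_Y$ (vertices in $V_X$ have valency $|X|$, in $V_Y$ valency $|Y|$). $A(v)$, $\overline{A}(v)$ are the sets of arcs with origin, resp. terminus, $v$. A legal colouring is a map $c:AT\to X\cup Y$ restricting to a bijection $A(v)\to X$ for $v\in V_X$, to a bijection $A(v)\to Y$ for $v\in V_Y$, and constant on each $\overline{A}(v)$. $U_c(M,N)$ is the group of $g\in\mathrm{Aut}(T)$ with $gV_X=V_X$ and $c|_{A(gv)}\circ g|_{A(v)}\circ(c|_{A(v)})^{-1}$ in $M$ for $v\in V_X$ and in $N$ for $v\in V_Y$. The box product $M\boxtimes N\le\mathrm{Sym}(V_Y)$ is the group induced on $V_Y$ by $U_c(M,N)$. *)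

theory Defs
  imports "HOL-Algebra.Bij" "HOL-Library.Equipollence"
begin

(* Graphs: vertex set V, adjacency relation E (only relevant on V). Arcs are ordered pairs (u,w) with E u w. *)

definition is_walk :: "('v \<Rightarrow> 'v \<Rightarrow> bool) \<Rightarrow> 'v list \<Rightarrow> bool" where
  "is_walk E xs \<longleftrightarrow> (\<forall>i. Suc i < length xs \<longrightarrow> E (xs ! i) (xs ! Suc i))"

definition non_backtracking :: "'v list \<Rightarrow> bool" where
  "non_backtracking xs \<longleftrightarrow> (\<forall>i. i + 2 < length xs \<longrightarrow> xs ! i \<noteq> xs ! (i + 2))"

(* A (possibly infinite, possibly infinitely-branching) tree: nonempty, symmetric adjacency on V,
   connected, and without nontrivial cycles (every non-backtracking walk with at least one edge
   has distinct endpoints; this also forces irreflexivity). *)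
definition is_tree :: "'v set \<Rightarrow> ('v \<Rightarrow> 'v \<Rightarrow> bool) \<Rightarrow> bool" where
  "is_tree V E \<longleftrightarrow> V \<noteq> {}
     \<and> (\<forall>u w. E u w \<longrightarrow> u \<in> V \<and> w \<in> V)
     \<and> (\<forall>u w. E u w \<longrightarrow> E w u)
     \<and> (\<forall>u\<in>V. \<forall>w\<in>V. E\<^sup>*\<^sup>* u w)
     \<and> (\<forall>xs. 2 \<le> length xs \<and> is_walk E xs \<and> non_backtracking xs \<longrightarrow> hd xs \<noteq> last xs)"

definition biregular_tree ::
  "'v set \<Rightarrow> ('v \<Rightarrow> 'v \<Rightarrow> bool) \<Rightarrow> 'v set \<Rightarrow> 'v set \<Rightarrow> 'c set \<Rightarrow> 'c set \<Rightarrow> bool" where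
  "biregular_tree V E VX VY X Y \<longleftrightarrow> is_tree V E
     \<and> VX \<union> VY = V \<and> VX \<inter> VY = {}
     \<and> (\<forall>u w. E u w \<longrightarrow> (u \<in> VX \<longleftrightarrow> w \<in> VY))
     \<and> (\<forall>v\<in>VX. {w. E v w} \<approx> X)
     \<and> (\<forall>v\<in>VY. {w. E v w} \<approx> Y)"

definition arcs_out :: "('v \<Rightarrow> 'v \<Rightarrow> bool) \<Rightarrow> 'v \<Rightarrow> ('v \<times> 'v) set" where
  "arcs_out E v = {(v, w) | w. E v w}"

definition arcs_in :: "('v \<Rightarrow> 'v \<Rightarrow> bool) \<Rightarrow> 'v \<Rightarrow> ('v \<times> 'v) set" where
  "arcs_in E v = {(w, v) | w. E w v}"

definition legal_colouring ::
  "('v \<Rightarrow> 'v \<Rightarrow> bool) \<Rightarrow> 'v set \<Rightarrow> 'v set \<Rightarrow> 'c set \<Rightarrow> 'c set \<Rightarrow> ('v \<times> 'v \<Rightarrow> 'c) \<Rightarrow> bool" where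
  "legal_colouring E VX VY X Y c \<longleftrightarrow>
     (\<forall>v\<in>VX. bij_betw c (arcs_out E v) X)
     \<and> (\<forall>v\<in>VY. bij_betw c (arcs_out E v) Y)
     \<and> (\<forall>v\<in>VX \<union> VY. \<forall>a\<in>arcs_in E v. \<forall>b\<in>arcs_in E v. c a = c b)"

definition tree_aut :: "'v set \<Rightarrow> ('v \<Rightarrow> 'v \<Rightarrow> bool) \<Rightarrow> ('v \<Rightarrow> 'v) set" where
  "tree_aut V E = {g \<in> Bij V. \<forall>u\<in>V. \<forall>w\<in>V. E u w \<longleftrightarrow> E (g u) (g w)}"

(* the local action  c|_{A(gv)} \<circ> g|_{A(v)} \<circ> (c|_{A(v)})^{-1}, as an extensional map on the colour set S *)
definition local_action ::
  "('v \<Rightarrow> 'v \<Rightarrow> bool) \<Rightarrow> ('v \<times> 'v \<Rightarrow> 'c) \<Rightarrow> ('v \<Rightarrow> 'v) \<Rightarrow> 'v \<Rightarrow> 'c set \<Rightarrow> 'c \<Rightarrow> 'c" where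
  "local_action E c g v S =
     (\<lambda>x\<in>S. c (case inv_into (arcs_out E v) c x of (a, b) \<Rightarrow> (g a, g b)))"

definition U_c ::
  "'v set \<Rightarrow> ('v \<Rightarrow> 'v \<Rightarrow> bool) \<Rightarrow> 'v set \<Rightarrow> 'v set \<Rightarrow> 'c set \<Rightarrow> 'c set \<Rightarrow> ('v \<times> 'v \<Rightarrow> 'c)
     \<Rightarrow> ('c \<Rightarrow> 'c) set \<Rightarrow> ('c \<Rightarrow> 'c) set \<Rightarrow> ('v \<Rightarrow> 'v) set" where
  "U_c V E VX VY X Y c M N =
     {g \<in> tree_aut V E. g ` VX = VX
        \<and> (\<forall>v\<in>VX. local_action E c g v X \<in> M)
        \<and> (\<forall>v\<in>VY. local_action E c g v Y \<in> N)}"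

definition box_product ::
  "'v set \<Rightarrow> ('v \<Rightarrow> 'v \<Rightarrow> bool) \<Rightarrow> 'v set \<Rightarrow> 'v set \<Rightarrow> 'c set \<Rightarrow> 'c set \<Rightarrow> ('v \<times> 'v \<Rightarrow> 'c)
     \<Rightarrow> ('c \<Rightarrow> 'c) set \<Rightarrow> ('c \<Rightarrow> 'c) set \<Rightarrow> ('v \<Rightarrow> 'v) set" where
  "box_product V E VX VY X Y c M N = (\<lambda>g. restrict g VY) ` U_c V E VX VY X Y c M N"

definition subdegree_finite :: "('a \<Rightarrow> 'a) set \<Rightarrow> 'a set \<Rightarrow> bool" where
  "subdegree_finite G \<Omega> \<longleftrightarrow>
     (\<forall>\<omega>\<in>\<Omega>. \<forall>\<alpha>\<in>\<Omega>. finite {g \<alpha> | g. g \<in> G \<and> g \<omega> = \<omega>})"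

definition all_orbits_finite :: "('a \<Rightarrow> 'a) set \<Rightarrow> 'a set \<Rightarrow> bool" where
  "all_orbits_finite G \<Omega> \<longleftrightarrow> (\<forall>\<alpha>\<in>\<Omega>. finite {g \<alpha> | g. g \<in> G})"

end

theory Submission
  imports Defs
begin

text \<open>Fix a base vertex \<open>v\<close>. Every vertex is reached from \<open>v\<close> along a unique reduced word of colours,
  its address. For a permutation \<open>f\<close> of the colours at \<open>v\<close>, applying \<open>f\<close> to the letters of all
  addresses at even positions is an automorphism fixing \<open>v\<close>, whose local actions are \<open>f\<close> and
  identities; it lies in \<open>U\<^sub>c(M, N)\<close> when \<open>f\<close> lies in \<open>M\<close> (\<open>v \<in> V\<^sub>X\<close>) or \<open>N\<close> (\<open>v \<in> V\<^sub>Y\<close>). Rotating about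
  \<open>v \<in> V\<^sub>X\<close> embeds a suborbit of \<open>M\<close> into a suborbit of \<open>M \<boxtimes> N\<close> on the neighbours of \<open>v\<close>; rotating
  about \<open>\<omega> \<in> V\<^sub>Y\<close> embeds an orbit of \<open>N\<close> into the suborbit of \<open>\<omega>\<close> on the vertices at distance two.

  Conversely, if \<open>g\<close> fixes \<open>\<omega>\<close>, the image of each arc on the geodesic from \<open>\<omega>\<close> to \<open>\<alpha>\<close> is determined
  by the image of the previous arc up to finitely many choices: a set \<open>{\<sigma> l | \<sigma> \<in> M, \<sigma> a = b}\<close>,
  finite as \<open>M\<close> is subdegree-finite, at vertices of \<open>V\<^sub>X\<close>, and an orbit of \<open>N\<close> at vertices of \<open>V\<^sub>Y\<close>.\<close>

section \<open>Lists\<close>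

lemma is_walk_Cons: "is_walk E (a # xs) \<longleftrightarrow> (xs \<noteq> [] \<longrightarrow> E a (hd xs)) \<and> is_walk E xs"
  unfolding is_walk_def by (auto simp: hd_conv_nth nth_Cons split: nat.splits)

lemma is_walk_Nil [simp]: "is_walk E []" and is_walk_singleton [simp]: "is_walk E [a]"
  by (simp_all add: is_walk_def)

lemma is_walk_append:
  "is_walk E xs \<Longrightarrow> is_walk E ys \<Longrightarrow> (xs \<noteq> [] \<Longrightarrow> ys \<noteq> [] \<Longrightarrow> E (last xs) (hd ys))
    \<Longrightarrow> is_walk E (xs @ ys)"
proof (induction xs)
  case (Cons a xs)
  then show ?case by (cases xs) (auto simp: is_walk_Cons)
qed simp

lemma is_walk_rev: "symp E \<Longrightarrow> is_walk E xs \<Longrightarrow> is_walk E (rev xs)"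
proof (induction xs)
  case (Cons a xs)
  then show ?case
    unfolding rev.simps by (intro is_walk_append) (auto simp: is_walk_Cons last_rev dest: sympD)
qed simp

lemma non_backtracking_Cons:
  "non_backtracking (a # xs) \<longleftrightarrow> (2 \<le> length xs \<longrightarrow> a \<noteq> xs ! 1) \<and> non_backtracking xs"
  unfolding non_backtracking_def
  by (auto simp: nth_Cons numeral_2_eq_2 split: nat.splits)

lemma non_backtracking_rev: "non_backtracking xs \<Longrightarrow> non_backtracking (rev xs)"
  unfolding non_backtracking_def
proof (intro allI impI)
  fix i assume nb: "\<forall>i. i + 2 < length xs \<longrightarrow> xs ! i \<noteq> xs ! (i + 2)"
    and i: "i + 2 < length (rev xs)"
  have "xs ! (length xs - 3 - i) \<noteq> xs ! (length xs - 3 - i + 2)" using nb i by auto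
  moreover have "length xs - 3 - i + 2 = length xs - Suc i" "length xs - 3 - i = length xs - Suc (i + 2)"
    using i by auto
  ultimately show "rev xs ! i \<noteq> rev xs ! (i + 2)" using i by (simp add: rev_nth)
qed

lemma non_backtracking_append:
  assumes "non_backtracking xs" "non_backtracking ys"
    and "2 \<le> length xs \<Longrightarrow> ys \<noteq> [] \<Longrightarrow> xs ! (length xs - 2) \<noteq> hd ys"
    and "xs \<noteq> [] \<Longrightarrow> 2 \<le> length ys \<Longrightarrow> last xs \<noteq> ys ! 1"
  shows "non_backtracking (xs @ ys)"
  unfolding non_backtracking_def
proof (intro allI impI)
  fix i assume i: "i + 2 < length (xs @ ys)"
  consider "i + 2 < length xs" | "length xs \<le> i" | "i + 2 = length xs" | "i + 1 = length xs"
    by linarith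
  then show "(xs @ ys) ! i \<noteq> (xs @ ys) ! (i + 2)"
  proof cases
    case 1
    then show ?thesis using assms(1) by (simp add: nth_append non_backtracking_def)
  next
    case 2
    then have "i - length xs + 2 < length ys" "i + 2 - length xs = i - length xs + 2" using i by auto
    then show ?thesis using assms(2) 2 by (simp add: nth_append non_backtracking_def)
  next
    case 3
    then have "i = length xs - 2" by simp
    then show ?thesis using assms(3) 3 i by (cases ys) (auto simp: nth_append)
  next
    case 4
    then have "xs \<noteq> []" "2 \<le> length ys" "i = length xs - 1" using i by auto
    then show ?thesis using assms(4) 4 by (auto simp: nth_append last_conv_nth numeral_2_eq_2)
  qed
qed

fun map_alternate :: "('a \<Rightarrow> 'a) \<Rightarrow> bool \<Rightarrow> 'a list \<Rightarrow> 'a list" where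
  "map_alternate f p [] = []"
| "map_alternate f p (x # xs) = (if p then f x else x) # map_alternate f (\<not> p) xs"

lemma length_map_alternate [simp]: "length (map_alternate f p xs) = length xs"
  by (induction xs arbitrary: p) auto

lemma map_alternate_eq_Nil_iff [simp]: "map_alternate f p xs = [] \<longleftrightarrow> xs = []"
  by (cases xs) auto

lemma map_alternate_snoc:
  "map_alternate f p (xs @ [x]) = map_alternate f p xs @ [if p = even (length xs) then f x else x]"
  by (induction xs arbitrary: p) auto

lemma map_alternate_butlast: "butlast (map_alternate f p xs) = map_alternate f p (butlast xs)"
  by (cases xs rule: rev_cases) (simp_all add: map_alternate_snoc)

lemma last_map_alternate:
  "xs \<noteq> [] \<Longrightarrow> last (map_alternate f p xs) = (if p = odd (length xs) then f (last xs) else last xs)"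
  by (cases xs rule: rev_cases) (auto simp: map_alternate_snoc)

section \<open>Permutation groups\<close>

lemma subgroup_BijGroup_id_mem:
  "subgroup M (BijGroup X) \<Longrightarrow> (\<lambda>x\<in>X. x) \<in> M"
  using subgroup.one_closed by (fastforce simp: BijGroup_def)

lemma subgroup_BijGroup_subset: "subgroup M (BijGroup X) \<Longrightarrow> M \<subseteq> Bij X"
  using subgroup.subset by (fastforce simp: BijGroup_def)

text \<open>The elements of \<open>M\<close> sending \<open>a\<close> to \<open>b\<close> form a coset \<open>\<sigma>\<^sub>0 M\<^sub>a\<close> of the point stabiliser,
  so they move \<open>l\<close> into the image under \<open>\<sigma>\<^sub>0\<close> of the finite suborbit \<open>M\<^sub>a l\<close>.\<close>
lemma subdegree_finite_transporter_image:
  assumes sg: "subgroup M (BijGroup X)" and sf: "subdegree_finite M X" and a: "a \<in> X" and l: "l \<in> X"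
  shows "finite {\<sigma> l | \<sigma>. \<sigma> \<in> M \<and> \<sigma> a = b}"
proof (cases "\<exists>\<sigma>\<^sub>0\<in>M. \<sigma>\<^sub>0 a = b")
  case True
  then obtain \<sigma>\<^sub>0 where \<sigma>\<^sub>0: "\<sigma>\<^sub>0 \<in> M" "\<sigma>\<^sub>0 a = b" by blast
  interpret G: group "BijGroup X" by (rule group_BijGroup)
  have MB: "M \<subseteq> Bij X" using sg by (rule subgroup_BijGroup_subset)
  have inj: "inj_on \<sigma>\<^sub>0 X" using MB \<sigma>\<^sub>0(1) by (auto simp: Bij_def bij_betw_def)
  have "{\<sigma> l | \<sigma>. \<sigma> \<in> M \<and> \<sigma> a = b} \<subseteq> \<sigma>\<^sub>0 ` {\<rho> l | \<rho>. \<rho> \<in> M \<and> \<rho> a = a}"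
  proof
    fix y assume "y \<in> {\<sigma> l | \<sigma>. \<sigma> \<in> M \<and> \<sigma> a = b}"
    then obtain \<sigma> where \<sigma>: "\<sigma> \<in> M" "\<sigma> a = b" and y: "y = \<sigma> l" by blast
    define \<rho> where "\<rho> = inv\<^bsub>BijGroup X\<^esub> \<sigma>\<^sub>0 \<otimes>\<^bsub>BijGroup X\<^esub> \<sigma>"
    have \<rho>M: "\<rho> \<in> M" unfolding \<rho>_def using sg \<sigma>\<^sub>0(1) \<sigma>(1)
      by (simp add: subgroup.m_closed subgroup.m_inv_closed)
    have carr: "\<sigma>\<^sub>0 \<in> carrier (BijGroup X)" "\<sigma> \<in> carrier (BijGroup X)"
      using MB \<sigma>\<^sub>0(1) \<sigma>(1) by (auto simp: BijGroup_def)
    have "\<sigma>\<^sub>0 \<otimes>\<^bsub>BijGroup X\<^esub> \<rho> = \<sigma>"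
      unfolding \<rho>_def using carr by (simp add: G.m_assoc[symmetric] G.r_inv)
    then have \<sigma>_eq: "\<sigma> x = \<sigma>\<^sub>0 (\<rho> x)" if "x \<in> X" for x
      using MB \<sigma>\<^sub>0(1) \<rho>M that unfolding BijGroup_def by (auto simp: compose_def)
    have "\<rho> a \<in> X" using MB \<rho>M a by (auto simp: Bij_def bij_betw_def)
    moreover have "\<sigma>\<^sub>0 (\<rho> a) = \<sigma>\<^sub>0 a" using \<sigma>_eq[OF a] \<sigma>(2) \<sigma>\<^sub>0(2) by simp
    ultimately have "\<rho> a = a" using inj_onD[OF inj] a by blast
    then have "\<rho> l \<in> {\<rho> l | \<rho>. \<rho> \<in> M \<and> \<rho> a = a}" using \<rho>M by blast
    then show "y \<in> \<sigma>\<^sub>0 ` {\<rho> l | \<rho>. \<rho> \<in> M \<and> \<rho> a = a}" using \<sigma>_eq[OF l] y by simp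
  qed
  moreover have "finite {\<rho> l | \<rho>. \<rho> \<in> M \<and> \<rho> a = a}"
    using sf a l by (simp add: subdegree_finite_def)
  ultimately show ?thesis using finite_surj by blast
next
  case False
  then have "{\<sigma> l | \<sigma>. \<sigma> \<in> M \<and> \<sigma> a = b} = {}" by blast
  then show ?thesis by (metis finite.emptyI)
qed

section \<open>Legally coloured biregular trees\<close>

locale legally_coloured_tree =
  fixes X Y :: "'c set" and V VX VY :: "'v set" and E :: "'v \<Rightarrow> 'v \<Rightarrow> bool"
    and c :: "'v \<times> 'v \<Rightarrow> 'c"
  assumes X_nonempty: "X \<noteq> {}" and Y_nonempty: "Y \<noteq> {}"
    and biregular: "biregular_tree V E VX VY X Y"
    and legal: "legal_colouring E VX VY X Y c"
begin

lemma V_eq: "V = VX \<union> VY" and VX_VY_disjoint: "VX \<inter> VY = {}"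
  using biregular by (simp_all add: biregular_tree_def)

lemma adj_in_V: "E u w \<Longrightarrow> u \<in> V \<and> w \<in> V"
  and adj_sym: "E u w \<Longrightarrow> E w u"
  and connected: "u \<in> V \<Longrightarrow> w \<in> V \<Longrightarrow> E\<^sup>*\<^sup>* u w"
  using biregular by (simp_all add: biregular_tree_def is_tree_def)

lemma symp_adj: "symp E"
  using adj_sym by (rule sympI)

lemma no_cycle: "2 \<le> length xs \<Longrightarrow> is_walk E xs \<Longrightarrow> non_backtracking xs \<Longrightarrow> hd xs \<noteq> last xs"
  using biregular by (simp add: biregular_tree_def is_tree_def)

lemma V_nonempty: "V \<noteq> {}"
  using biregular by (simp add: biregular_tree_def is_tree_def)

lemma adj_class: "E z w \<Longrightarrow> w \<in> VX \<longleftrightarrow> z \<notin> VX"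
  using biregular adj_in_V V_eq VX_VY_disjoint unfolding biregular_tree_def by blast

definition palette :: "bool \<Rightarrow> 'c set" where
  "palette isX = (if isX then X else Y)"

definition palette_at :: "'v \<Rightarrow> 'c set" where
  "palette_at z = palette (z \<in> VX)"

lemma palette_nonempty: "palette isX \<noteq> {}"
  using X_nonempty Y_nonempty by (simp add: palette_def)

lemma bij_out_colour: "z \<in> V \<Longrightarrow> bij_betw c (arcs_out E z) (palette_at z)"
  using legal V_eq by (auto simp: legal_colouring_def palette_at_def palette_def)

text \<open>A legal colouring is constant on the arcs into a vertex, so it colours vertices.\<close>
definition in_colour :: "'v \<Rightarrow> 'c" where
  "in_colour z = c (SOME p. E p z, z)"

lemma colour_arc_eq_in_colour:
  assumes "E p z" shows "c (p, z) = in_colour z"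
proof -
  have "E (SOME p. E p z) z" using assms by (rule someI)
  then have "(p, z) \<in> arcs_in E z" "((SOME p. E p z), z) \<in> arcs_in E z"
    using assms by (auto simp: arcs_in_def)
  moreover have "z \<in> VX \<union> VY" using adj_in_V[OF assms] V_eq by simp
  ultimately show ?thesis using legal unfolding in_colour_def legal_colouring_def by blast
qed

lemma in_colour_in_palette: "E z w \<Longrightarrow> in_colour w \<in> palette_at z"
  using bij_betw_apply[OF bij_out_colour] adj_in_V colour_arc_eq_in_colour
  by (force simp: arcs_out_def)

lemma adj_in_colour_inj:
  assumes "E z w" "E z w'" "in_colour w = in_colour w'" shows "w = w'"
proof -
  have "inj_on c (arcs_out E z)"
    using bij_out_colour adj_in_V[OF assms(1)] by (simp add: bij_betw_def)
  moreover have "c (z, w) = c (z, w')" using assms colour_arc_eq_in_colour by simp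
  ultimately show ?thesis using assms(1,2) by (auto simp: arcs_out_def dest: inj_onD)
qed

lemma nbr_exists:
  assumes "z \<in> V" "l \<in> palette_at z" shows "\<exists>w. E z w \<and> in_colour w = l"
proof -
  have "l \<in> c ` arcs_out E z" using bij_out_colour[OF assms(1)] assms(2) by (simp add: bij_betw_def)
  then show ?thesis using colour_arc_eq_in_colour by (auto simp: arcs_out_def)
qed

definition nbr :: "'v \<Rightarrow> 'c \<Rightarrow> 'v" where
  "nbr z l = (SOME w. E z w \<and> in_colour w = l)"

lemma adj_nbr: "z \<in> V \<Longrightarrow> l \<in> palette_at z \<Longrightarrow> E z (nbr z l)"
  and in_colour_nbr: "z \<in> V \<Longrightarrow> l \<in> palette_at z \<Longrightarrow> in_colour (nbr z l) = l"
  using someI_ex[OF nbr_exists] by (auto simp: nbr_def)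

lemma nbr_in_colour: "E z w \<Longrightarrow> nbr z (in_colour w) = w"
  using adj_in_colour_inj adj_nbr in_colour_nbr in_colour_in_palette adj_in_V by metis

lemma ex_adj: "z \<in> V \<Longrightarrow> \<exists>w. E z w"
  using palette_nonempty nbr_exists unfolding palette_at_def by blast

lemma in_colour_in_opposite_palette:
  assumes "z \<in> V" shows "in_colour z \<in> palette (z \<notin> VX)"
proof -
  obtain p where "E p z" using ex_adj[OF assms] adj_sym by blast
  then show ?thesis using in_colour_in_palette adj_class by (simp add: palette_at_def)
qed

lemma nbr_in_V: "z \<in> V \<Longrightarrow> l \<in> palette_at z \<Longrightarrow> nbr z l \<in> V"
  and nbr_class: "z \<in> V \<Longrightarrow> l \<in> palette_at z \<Longrightarrow> nbr z l \<in> VX \<longleftrightarrow> z \<notin> VX"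
  using adj_nbr adj_in_V adj_class by blast+

subsection \<open>Vertices as reduced colour words\<close>

fun follow :: "'v \<Rightarrow> 'c list \<Rightarrow> 'v" where
  "follow z [] = z"
| "follow z (l # ls) = follow (nbr z l) ls"

fun follow_path :: "'v \<Rightarrow> 'c list \<Rightarrow> 'v list" where
  "follow_path z [] = [z]"
| "follow_path z (l # ls) = z # follow_path (nbr z l) ls"

text \<open>\<open>reduced_word isX b cur ls\<close>: reading \<open>ls\<close> from a vertex of class \<open>isX\<close> with in-colour \<open>cur\<close>,
  every letter is an out-colour of the current vertex and differs from the in-colour of the
  previous vertex (initially from \<open>b\<close>), i.e.\ the walk never backtracks. The condition only
  mentions colours, which is what lets \<^const>\<open>map_alternate\<close> act on reduced words.\<close>
fun reduced_word :: "bool \<Rightarrow> 'c option \<Rightarrow> 'c \<Rightarrow> 'c list \<Rightarrow> bool" where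
  "reduced_word isX b cur [] = True"
| "reduced_word isX b cur (l # ls) =
     (l \<in> palette isX \<and> Some l \<noteq> b \<and> reduced_word (\<not> isX) (Some cur) l ls)"

fun next_forbidden :: "'c option \<Rightarrow> 'c \<Rightarrow> 'c list \<Rightarrow> 'c option" where
  "next_forbidden b cur [] = b"
| "next_forbidden b cur (l # ls) = next_forbidden (Some cur) l ls"

definition reduced :: "'v \<Rightarrow> 'c option \<Rightarrow> 'c list \<Rightarrow> bool" where
  "reduced z b ls = reduced_word (z \<in> VX) b (in_colour z) ls"

lemma reduced_Nil [simp]: "reduced z b []"
  by (simp add: reduced_def)

lemma reduced_Cons:
  assumes "z \<in> V"
  shows "reduced z b (l # ls) \<longleftrightarrow>
    l \<in> palette_at z \<and> Some l \<noteq> b \<and> reduced (nbr z l) (Some (in_colour z)) ls"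
  using nbr_class[OF assms] in_colour_nbr[OF assms]
  by (cases "l \<in> palette_at z") (auto simp: reduced_def palette_at_def)

lemma follow_in_V_class:
  "z \<in> V \<Longrightarrow> reduced z b ls \<Longrightarrow>
    follow z ls \<in> V \<and> (follow z ls \<in> VX \<longleftrightarrow> (z \<in> VX \<longleftrightarrow> even (length ls)))"
proof (induction ls arbitrary: z b)
  case (Cons l ls)
  then show ?case using nbr_in_V nbr_class by (auto simp: reduced_Cons)
qed simp

lemma follow_snoc: "follow z (ls @ [l]) = nbr (follow z ls) l"
  by (induction ls arbitrary: z) auto

lemma reduced_word_snoc:
  "reduced_word isX b cur (ls @ [l]) \<longleftrightarrow> reduced_word isX b cur ls
     \<and> l \<in> palette (isX = even (length ls)) \<and> Some l \<noteq> next_forbidden b cur ls"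
proof (induction ls arbitrary: isX b cur)
  case (Cons a ls)
  have "((\<not> isX) = even (length ls)) = (isX = even (length (a # ls)))" by (cases isX) auto
  then show ?case using Cons.IH[of "\<not> isX" "Some cur" a] by auto
qed simp

lemma reduced_snoc:
  assumes "z \<in> V" "reduced z b ls"
  shows "reduced z b (ls @ [l]) \<longleftrightarrow>
    l \<in> palette_at (follow z ls) \<and> Some l \<noteq> next_forbidden b (in_colour z) ls"
proof -
  have "palette_at (follow z ls) = palette ((z \<in> VX) = even (length ls))"
    using follow_in_V_class[OF assms] by (simp add: palette_at_def)
  then show ?thesis using assms(2) by (simp add: reduced_def reduced_word_snoc)
qed

lemma reduced_prefix: "reduced z b (ls @ rs) \<Longrightarrow> reduced z b ls"
  by (induction rs rule: rev_induct) (simp_all add: reduced_def reduced_word_snoc flip: append_assoc)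

lemma reduced_butlast: "reduced z b ls \<Longrightarrow> reduced z b (butlast ls)"
  by (cases ls rule: rev_cases) (auto dest: reduced_prefix)

lemma adj_follow_snoc:
  assumes "z \<in> V" "reduced z b (ls @ [l])"
  shows "E (follow z ls) (follow z (ls @ [l]))" and "in_colour (follow z (ls @ [l])) = l"
proof -
  have "reduced z b ls" using reduced_prefix assms(2) by blast
  then have "follow z ls \<in> V" "l \<in> palette_at (follow z ls)"
    using follow_in_V_class[OF assms(1)] reduced_snoc[OF assms(1)] assms(2) by blast+
  then show "E (follow z ls) (follow z (ls @ [l]))" "in_colour (follow z (ls @ [l])) = l"
    by (simp_all add: follow_snoc adj_nbr in_colour_nbr)
qed

lemma adj_follow_butlast:
  assumes "z \<in> V" "reduced z b ls" "ls \<noteq> []"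
  shows "E (follow z (butlast ls)) (follow z ls)"
  using adj_follow_snoc(1)[OF assms(1), of b "butlast ls" "last ls"] assms by simp

lemma in_colour_follow:
  assumes "z \<in> V" "reduced z b ls" "ls \<noteq> []"
  shows "in_colour (follow z ls) = last ls"
  using adj_follow_snoc(2)[OF assms(1), of b "butlast ls" "last ls"] assms by simp

lemma next_forbidden_eq:
  "z \<in> V \<Longrightarrow> reduced z b ls \<Longrightarrow> ls \<noteq> [] \<Longrightarrow>
    next_forbidden b (in_colour z) ls = Some (in_colour (follow z (butlast ls)))"
proof (induction ls arbitrary: z b)
  case (Cons l ls)
  then have l: "l \<in> palette_at z" and ls: "reduced (nbr z l) (Some (in_colour z)) ls"
    by (auto simp: reduced_Cons)
  show ?case
  proof (cases "ls = []")
    case False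
    then show ?thesis
      using Cons.IH[OF nbr_in_V[OF Cons.prems(1) l] ls] in_colour_nbr[OF Cons.prems(1) l] by simp
  qed simp
qed simp

lemma adj_follow_cases:
  assumes "v \<in> V" "reduced v None ls" "E (follow v ls) z"
  obtains "ls \<noteq> []" "z = follow v (butlast ls)"
    | "reduced v None (ls @ [in_colour z])" "z = follow v (ls @ [in_colour z])"
proof (cases "Some (in_colour z) = next_forbidden None (in_colour v) ls")
  case True
  then have ne: "ls \<noteq> []" by (cases ls) auto
  have "in_colour z = in_colour (follow v (butlast ls))"
    using True next_forbidden_eq[OF assms(1,2) ne] by simp
  moreover have "E (follow v ls) (follow v (butlast ls))"
    using adj_follow_butlast[OF assms(1,2) ne] by (rule adj_sym)
  ultimately have "z = follow v (butlast ls)" using adj_in_colour_inj[OF assms(3)] by blast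
  then show ?thesis using ne that(1) by blast
next
  case False
  have "reduced v None (ls @ [in_colour z])"
    using reduced_snoc[OF assms(1,2)] in_colour_in_palette[OF assms(3)] False by auto
  moreover have "follow v (ls @ [in_colour z]) = z"
    using follow_snoc nbr_in_colour[OF assms(3)] by simp
  ultimately show ?thesis using that(2) by simp
qed

lemma ex_reduced_follow_eq:
  assumes "v \<in> V" "z \<in> V" shows "\<exists>ls. reduced v None ls \<and> follow v ls = z"
proof -
  have "E\<^sup>*\<^sup>* v z" using connected assms by blast
  then show ?thesis
  proof (induction rule: rtranclp_induct)
    case base
    show ?case by (intro exI[of _ "[]"]) simp
  next
    case (step y z)
    then obtain ls where ls: "reduced v None ls" "follow v ls = y" by blast
    with step(2) show ?case
      by (cases rule: adj_follow_cases[OF assms(1) ls(1)]) (auto intro: reduced_butlast)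
  qed
qed

lemma hd_follow_path: "hd (follow_path z ls) = z"
  by (cases ls) auto

lemma follow_path_neq_Nil [simp]: "follow_path z ls \<noteq> []"
  by (cases ls) auto

lemma last_follow_path: "last (follow_path z ls) = follow z ls"
  by (induction ls arbitrary: z) auto

lemma length_follow_path: "length (follow_path z ls) = Suc (length ls)"
  by (induction ls arbitrary: z) auto

lemma follow_path_nth_0 [simp]: "follow_path z ls ! 0 = z"
  by (cases ls) auto

lemma is_walk_follow_path: "z \<in> V \<Longrightarrow> reduced z b ls \<Longrightarrow> is_walk E (follow_path z ls)"
proof (induction ls arbitrary: z b)
  case (Cons l ls)
  then show ?case
    using nbr_in_V adj_nbr by (auto simp: reduced_Cons is_walk_Cons hd_follow_path)
qed simp

lemma non_backtracking_follow_path: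
  "z \<in> V \<Longrightarrow> reduced z b ls \<Longrightarrow> non_backtracking (follow_path z ls)"
proof (induction ls arbitrary: z b)
  case Nil
  then show ?case by (simp add: non_backtracking_def)
next
  case (Cons l ls)
  then have l: "l \<in> palette_at z" and ls: "reduced (nbr z l) (Some (in_colour z)) ls"
    and nV: "nbr z l \<in> V"
    using nbr_in_V by (auto simp: reduced_Cons)
  have "z \<noteq> follow_path (nbr z l) ls ! 1" if len: "2 \<le> length (follow_path (nbr z l) ls)"
  proof -
    obtain l' ls' where ls_eq: "ls = l' # ls'" using len by (cases ls) (auto simp: length_follow_path)
    then have "l' \<in> palette_at (nbr z l)" "l' \<noteq> in_colour z"
      using ls by (auto simp: reduced_Cons[OF nV])
    then have "in_colour (nbr (nbr z l) l') \<noteq> in_colour z" using in_colour_nbr[OF nV] by simp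
    then show ?thesis using ls_eq by auto
  qed
  then show ?case using Cons.IH[OF nV ls] by (simp add: non_backtracking_Cons)
qed

lemma follow_neq_self:
  assumes "z \<in> V" "reduced z b ls" "ls \<noteq> []" shows "follow z ls \<noteq> z"
proof -
  have "2 \<le> length (follow_path z ls)" using assms(3) by (cases ls) (auto simp: length_follow_path)
  then show ?thesis
    using no_cycle is_walk_follow_path[OF assms(1,2)] non_backtracking_follow_path[OF assms(1,2)]
    by (metis hd_follow_path last_follow_path)
qed

text \<open>Two reduced words leaving \<open>z\<close> along different arcs end at different vertices: otherwise
  one path reversed followed by the other would be a non-backtracking closed walk.\<close>
lemma follow_neq_of_first_neq:
  assumes z: "z \<in> V" and ls1: "reduced z b (l1 # ls1)" and ls2: "reduced z b (l2 # ls2)"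
    and "l1 \<noteq> l2"
  shows "follow z (l1 # ls1) \<noteq> follow z (l2 # ls2)"
proof
  assume eq: "follow z (l1 # ls1) = follow z (l2 # ls2)"
  have l2: "l2 \<in> palette_at z" and ls2': "reduced (nbr z l2) (Some (in_colour z)) ls2"
    using ls2 by (auto simp: reduced_Cons[OF z])
  have n2V: "nbr z l2 \<in> V" using nbr_in_V[OF z l2] .
  define Q where "Q = follow_path (nbr z l2) ls2"
  define P where "P = follow_path z (l1 # ls1)"
  have Q: "hd Q = nbr z l2" "Q \<noteq> []" "last Q = follow z (l2 # ls2)"
    using hd_follow_path last_follow_path Q_def by auto
  have P: "hd P = z" "P ! 1 = nbr z l1" "2 \<le> length P" "last P = follow z (l1 # ls1)"
    using P_def hd_follow_path length_follow_path last_follow_path by auto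
  have "nbr z l1 \<noteq> nbr z l2"
    using in_colour_nbr[OF z] ls1 l2 \<open>l1 \<noteq> l2\<close> by (metis reduced_Cons[OF z])
  have "is_walk E (rev Q @ P)"
  proof (rule is_walk_append)
    show "is_walk E (rev Q)"
      using is_walk_rev[OF symp_adj is_walk_follow_path[OF n2V ls2']] Q_def by simp
    show "is_walk E P" using is_walk_follow_path[OF z ls1] P_def by simp
    show "E (last (rev Q)) (hd P)" using Q P adj_nbr[OF z l2] adj_sym by (simp add: last_rev)
  qed
  moreover have "non_backtracking (rev Q @ P)"
  proof (rule non_backtracking_append)
    show "non_backtracking (rev Q)"
      using non_backtracking_rev[OF non_backtracking_follow_path[OF n2V ls2']] Q_def by simp
    show "non_backtracking P" using non_backtracking_follow_path[OF z ls1] P_def by simp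
    have "non_backtracking (z # Q)" using non_backtracking_follow_path[OF z ls2] Q_def by simp
    then show "rev Q ! (length (rev Q) - 2) \<noteq> hd P" if "2 \<le> length (rev Q)"
      using that P by (auto simp: rev_nth numeral_2_eq_2 non_backtracking_Cons)
    show "last (rev Q) \<noteq> P ! 1" using Q P \<open>nbr z l1 \<noteq> nbr z l2\<close> by (simp add: last_rev)
  qed
  moreover have "hd (rev Q @ P) = last (rev Q @ P)"
    using Q P eq by (auto simp: hd_rev last_append)
  ultimately show False using no_cycle P(3) by simp
qed

lemma reduced_follow_inj:
  "z \<in> V \<Longrightarrow> reduced z b ls1 \<Longrightarrow> reduced z b ls2 \<Longrightarrow> follow z ls1 = follow z ls2 \<Longrightarrow> ls1 = ls2"
proof (induction ls1 arbitrary: z b ls2)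
  case Nil
  then show ?case using follow_neq_self by (metis follow.simps(1))
next
  case (Cons l1 ls1)
  show ?case
  proof (cases ls2)
    case Nil
    then show ?thesis using follow_neq_self Cons.prems by (metis follow.simps(1) list.discI)
  next
    case (Cons l2 ls2')
    then show ?thesis
      using Cons.prems Cons.IH[of "nbr z l1" "Some (in_colour z)" ls2'] nbr_in_V
        follow_neq_of_first_neq[OF Cons.prems(1,2)]
      by (cases "l1 = l2") (auto simp: reduced_Cons)
  qed
qed

subsection \<open>Rotations about a vertex\<close>

lemma reduced_word_map_alternate:
  "reduced_word isX b cur ls \<Longrightarrow> bij_betw f (palette isX\<^sub>0) (palette isX\<^sub>0) \<Longrightarrow> (p \<longleftrightarrow> isX = isX\<^sub>0)
    \<Longrightarrow> set_option b \<subseteq> palette isX \<Longrightarrow> cur \<in> palette (\<not> isX)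
    \<Longrightarrow> reduced_word isX (map_option (\<lambda>x. if p then f x else x) b) (if p then cur else f cur)
          (map_alternate f p ls)"
proof (induction ls arbitrary: isX b cur p)
  case (Cons l ls)
  then have l: "l \<in> palette isX" "Some l \<noteq> b" and ls: "reduced_word (\<not> isX) (Some cur) l ls"
    by auto
  have f_inj: "inj_on f (palette isX\<^sub>0)" and f_maps: "f ` palette isX\<^sub>0 = palette isX\<^sub>0"
    using Cons.prems(2) by (auto simp: bij_betw_def)
  have "(if p then f l else l) \<in> palette isX" using l(1) f_maps Cons.prems(3) by auto
  moreover have "Some (if p then f l else l) \<noteq> map_option (\<lambda>x. if p then f x else x) b"
    using l Cons.prems(3,4) inj_onD[OF f_inj] by (cases b) auto
  moreover have "reduced_word (\<not> isX) (Some (if p then cur else f cur)) (if p then f l else l)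
      (map_alternate f (\<not> p) ls)"
    using Cons.IH[OF ls Cons.prems(2), of "\<not> p"] Cons.prems(3,5) l(1) by (cases p) auto
  ultimately show ?case by simp
qed simp

lemma map_alternate_inverse:
  "reduced_word isX b cur ls \<Longrightarrow> (p \<longleftrightarrow> isX = isX\<^sub>0) \<Longrightarrow> (\<forall>x\<in>palette isX\<^sub>0. g (f x) = x)
    \<Longrightarrow> map_alternate g p (map_alternate f p ls) = ls"
proof (induction ls arbitrary: isX b cur p)
  case (Cons l ls)
  then have "l \<in> palette isX" and ls: "reduced_word (\<not> isX) (Some cur) l ls" by auto
  then have "(if p then g (f l) else l) = l" using Cons.prems(2,3) by auto
  moreover have "map_alternate g (\<not> p) (map_alternate f (\<not> p) ls) = ls"
    using Cons.IH[OF ls, of "\<not> p"] Cons.prems(2,3) by auto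
  ultimately show ?case by (cases p) simp_all
qed simp

lemma reduced_map_alternate:
  assumes "v \<in> V" "bij_betw f (palette_at v) (palette_at v)" "reduced v None ls"
  shows "reduced v None (map_alternate f True ls)"
  using reduced_word_map_alternate[of "v \<in> VX" None "in_colour v" ls f "v \<in> VX" True] assms
    in_colour_in_opposite_palette[OF assms(1)]
  by (simp add: reduced_def palette_at_def)

lemma map_alternate_inverse_reduced:
  "reduced v None ls \<Longrightarrow> \<forall>x\<in>palette_at v. g (f x) = x
    \<Longrightarrow> map_alternate g True (map_alternate f True ls) = ls"
  using map_alternate_inverse[of "v \<in> VX" None "in_colour v" ls True "v \<in> VX" g f]
  by (simp add: reduced_def palette_at_def)

definition address :: "'v \<Rightarrow> 'v \<Rightarrow> 'c list" where
  "address v z = (THE ls. reduced v None ls \<and> follow v ls = z)"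

lemma reduced_address: "v \<in> V \<Longrightarrow> z \<in> V \<Longrightarrow> reduced v None (address v z)"
  and follow_address: "v \<in> V \<Longrightarrow> z \<in> V \<Longrightarrow> follow v (address v z) = z"
proof -
  assume "v \<in> V" "z \<in> V"
  then have "\<exists>!ls. reduced v None ls \<and> follow v ls = z"
    using ex_reduced_follow_eq reduced_follow_inj by blast
  then have "reduced v None (address v z) \<and> follow v (address v z) = z"
    unfolding address_def by (rule theI')
  then show "reduced v None (address v z)" "follow v (address v z) = z" by auto
qed

lemma address_follow: "v \<in> V \<Longrightarrow> reduced v None ls \<Longrightarrow> address v (follow v ls) = ls"
  using reduced_follow_inj reduced_address follow_address follow_in_V_class by metis

lemma class_eq_parity_address:
  "v \<in> V \<Longrightarrow> z \<in> V \<Longrightarrow> z \<in> VX \<longleftrightarrow> (v \<in> VX \<longleftrightarrow> even (length (address v z)))"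
  using follow_in_V_class[OF _ reduced_address] follow_address by metis

text \<open>The rotation about \<open>v\<close> by a permutation \<open>f\<close> of the out-colours at \<open>v\<close> applies \<open>f\<close> to the
  letters of every address at even positions, i.e.\ to the colours leaving vertices at even
  distance from \<open>v\<close>; its local action is \<open>f\<close> at those vertices and the identity elsewhere.\<close>
definition rotation :: "'v \<Rightarrow> ('c \<Rightarrow> 'c) \<Rightarrow> 'v \<Rightarrow> 'v" where
  "rotation v f = (\<lambda>z\<in>V. follow v (map_alternate f True (address v z)))"

context
  fixes v f assumes v: "v \<in> V" and f: "bij_betw f (palette_at v) (palette_at v)"
begin

lemma rotation_follow: "reduced v None ls \<Longrightarrow> rotation v f (follow v ls) = follow v (map_alternate f True ls)"
  using follow_in_V_class[OF v] address_follow[OF v] by (simp add: rotation_def)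

lemma rotation_root: "rotation v f v = v"
  using rotation_follow[of "[]"] by simp

lemma rotation_in_V_class:
  assumes "z \<in> V" shows "rotation v f z \<in> V \<and> (rotation v f z \<in> VX \<longleftrightarrow> z \<in> VX)"
proof -
  have ls: "reduced v None (address v z)" using reduced_address[OF v assms] .
  show ?thesis
    using follow_in_V_class[OF v reduced_map_alternate[OF v f ls]] class_eq_parity_address[OF v assms]
      assms by (simp add: rotation_def)
qed

lemma rotation_adj:
  assumes "E z w" shows "E (rotation v f z) (rotation v f w)"
proof -
  define ls where "ls = address v z"
  have ls: "reduced v None ls" "follow v ls = z"
    using reduced_address[OF v] follow_address[OF v] adj_in_V[OF assms] ls_def by auto
  have ls': "reduced v None (map_alternate f True ls)" using reduced_map_alternate[OF v f ls(1)] .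
  have "E (follow v ls) w" using assms ls(2) by simp
  from adj_follow_cases[OF v ls(1) this] show ?thesis
  proof cases
    case 1
    then have "E (follow v (butlast (map_alternate f True ls))) (follow v (map_alternate f True ls))"
      using adj_follow_butlast[OF v ls'] by simp
    then show ?thesis
      using 1 ls rotation_follow reduced_butlast adj_sym by (metis map_alternate_butlast)
  next
    case 2
    have "reduced v None (map_alternate f True ls @
        [if even (length ls) then f (in_colour w) else in_colour w])"
      using reduced_map_alternate[OF v f 2(1)] by (simp add: map_alternate_snoc)
    moreover have "rotation v f z = follow v (map_alternate f True ls)"
      "rotation v f w = follow v (map_alternate f True (ls @ [in_colour w]))"
      using 2 ls rotation_follow by metis+
    ultimately show ?thesis using adj_follow_snoc(1)[OF v] by (simp add: map_alternate_snoc)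
  qed
qed

lemma in_colour_rotation_follow:
  "reduced v None ls \<Longrightarrow> ls \<noteq> [] \<Longrightarrow>
    in_colour (rotation v f (follow v ls)) = (if odd (length ls) then f (last ls) else last ls)"
  using rotation_follow in_colour_follow[OF v reduced_map_alternate[OF v f]]
  by (simp add: last_map_alternate)

lemma in_colour_rotation:
  assumes "E z w"
  shows "in_colour (rotation v f w) = (if even (length (address v z)) then f (in_colour w) else in_colour w)"
proof -
  define ls where "ls = address v z"
  have ls: "reduced v None ls" "follow v ls = z"
    using reduced_address[OF v] follow_address[OF v] adj_in_V[OF assms] ls_def by auto
  have "E (follow v ls) w" using assms ls(2) by simp
  from adj_follow_cases[OF v ls(1) this] show ?thesis
  proof cases
    case 1
    show ?thesis
    proof (cases "butlast ls = []")
      case True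
      then have "length ls = 1" using 1 by (cases ls) (auto split: if_splits)
      then show ?thesis using 1 True rotation_root ls_def by simp
    next
      case False
      have "even (length ls) \<longleftrightarrow> odd (length (butlast ls))" using 1 by (cases ls) auto
      then show ?thesis
        using 1 False ls_def reduced_butlast[OF ls(1)] in_colour_rotation_follow
          in_colour_follow[OF v reduced_butlast[OF ls(1)]] by simp
    qed
  next
    case 2
    then show ?thesis
      using ls_def in_colour_rotation_follow[OF 2(1)] by simp
  qed
qed

end

lemma rotation_rotation_inverse:
  assumes "v \<in> V" "bij_betw f (palette_at v) (palette_at v)" "bij_betw g (palette_at v) (palette_at v)"
    "\<forall>x\<in>palette_at v. g (f x) = x" "z \<in> V"
  shows "rotation v g (rotation v f z) = z"
proof -
  define ls where "ls = address v z"
  have ls: "reduced v None ls" "follow v ls = z"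
    using reduced_address[OF assms(1,5)] follow_address[OF assms(1,5)] ls_def by auto
  then show ?thesis
    using rotation_follow[OF assms(1,2)] rotation_follow[OF assms(1,3)]
      reduced_map_alternate[OF assms(1,2)] map_alternate_inverse_reduced assms(4)
    by metis
qed

lemma local_action_eq:
  assumes "z \<in> V" "x \<in> palette_at z" "E (g z) (g (nbr z x))"
  shows "local_action E c g z (palette_at z) x = in_colour (g (nbr z x))"
proof -
  have "(z, nbr z x) \<in> arcs_out E z" using adj_nbr[OF assms(1,2)] by (simp add: arcs_out_def)
  moreover have "c (z, nbr z x) = x"
    using colour_arc_eq_in_colour adj_nbr in_colour_nbr assms(1,2) by simp
  ultimately have "inv_into (arcs_out E z) c x = (z, nbr z x)"
    using inv_into_f_eq[OF bij_betw_imp_inj_on[OF bij_out_colour[OF assms(1)]]] by simp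
  then show ?thesis
    using assms(2) colour_arc_eq_in_colour[OF assms(3)] by (simp add: local_action_def)
qed

lemma local_action_rotation:
  assumes v: "v \<in> V" and f: "f \<in> Bij (palette_at v)" and z: "z \<in> V"
  shows "local_action E c (rotation v f) z (palette_at z) =
    (if even (length (address v z)) then f else (\<lambda>x\<in>palette_at z. x))"
proof
  fix x
  have bij: "bij_betw f (palette_at v) (palette_at v)" using f by (simp add: Bij_def)
  have palette_eq: "even (length (address v z)) \<Longrightarrow> palette_at z = palette_at v"
    using class_eq_parity_address[OF v z] by (simp add: palette_at_def)
  show "local_action E c (rotation v f) z (palette_at z) x =
    (if even (length (address v z)) then f else (\<lambda>x\<in>palette_at z. x)) x"
  proof (cases "x \<in> palette_at z")
    case True
    then show ?thesis
      using local_action_eq[OF z True rotation_adj[OF v bij adj_nbr[OF z True]]]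
        in_colour_rotation[OF v bij adj_nbr[OF z True]] in_colour_nbr[OF z True] by simp
  next
    case False
    then show ?thesis using f palette_eq by (auto simp: local_action_def Bij_def extensional_def)
  qed
qed

lemma rotation_in_tree_aut:
  assumes v: "v \<in> V" and f: "bij_betw f (palette_at v) (palette_at v)"
  shows "rotation v f \<in> tree_aut V E"
proof -
  define g where "g = inv_into (palette_at v) f"
  have g: "bij_betw g (palette_at v) (palette_at v)" unfolding g_def using f by (rule bij_betw_inv_into)
  have gf: "\<forall>x\<in>palette_at v. g (f x) = x" and fg: "\<forall>x\<in>palette_at v. f (g x) = x"
    unfolding g_def using f by (auto simp: bij_betw_def f_inv_into_f)
  have inverse: "rotation v g (rotation v f z) = z" "rotation v f (rotation v g z) = z" if "z \<in> V" for z
    using rotation_rotation_inverse[OF v f g gf that] rotation_rotation_inverse[OF v g f fg that] by auto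
  have "bij_betw (rotation v f) V V"
    using rotation_in_V_class[OF v f] rotation_in_V_class[OF v g] inverse
    by (intro bij_betw_byWitness[where f' = "rotation v g"]) auto
  moreover have "E u w \<longleftrightarrow> E (rotation v f u) (rotation v f w)" if "u \<in> V" "w \<in> V" for u w
    using rotation_adj[OF v f] rotation_adj[OF v g, of "rotation v f u" "rotation v f w"] inverse that
    by auto
  ultimately show ?thesis by (simp add: tree_aut_def Bij_def rotation_def)
qed

lemma rotation_image_VX:
  assumes v: "v \<in> V" and f: "bij_betw f (palette_at v) (palette_at v)"
  shows "rotation v f ` VX = VX"
proof -
  have "bij_betw (rotation v f) V V" using rotation_in_tree_aut[OF assms] by (simp add: tree_aut_def Bij_def)
  then show ?thesis
    using rotation_in_V_class[OF v f] V_eq by (auto simp: bij_betw_def)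
qed

lemma rotation_in_U_c:
  assumes M: "subgroup M (BijGroup X)" and N: "subgroup N (BijGroup Y)" and v: "v \<in> V"
    and f: "f \<in> (if v \<in> VX then M else N)"
  shows "rotation v f \<in> U_c V E VX VY X Y c M N"
proof -
  have fB: "f \<in> Bij (palette_at v)"
    using f subgroup_BijGroup_subset[OF M] subgroup_BijGroup_subset[OF N]
    by (auto simp: palette_at_def palette_def split: if_splits)
  then have bij: "bij_betw f (palette_at v) (palette_at v)" by (simp add: Bij_def)
  have "local_action E c (rotation v f) z (palette_at z) \<in> (if z \<in> VX then M else N)"
    if "z \<in> V" for z
    using local_action_rotation[OF v fB that] class_eq_parity_address[OF v that] f
      subgroup_BijGroup_id_mem[OF M] subgroup_BijGroup_id_mem[OF N]
    by (auto simp: palette_at_def palette_def)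
  then show ?thesis
    using rotation_in_tree_aut[OF v bij] rotation_image_VX[OF v bij] V_eq VX_VY_disjoint
    by (fastforce simp: U_c_def palette_at_def palette_def)
qed

subsection \<open>Finiteness of the suborbits of \<open>U\<^sub>c(M, N)\<close>\<close>

lemma finite_adj_in_colour:
  assumes "finite L" shows "finite {w. E z w \<and> in_colour w \<in> L}"
proof (rule finite_imageD)
  show "finite (in_colour ` {w. E z w \<and> in_colour w \<in> L})" using assms by (rule finite_subset[rotated]) auto
  show "inj_on in_colour {w. E z w \<and> in_colour w \<in> L}"
    unfolding inj_on_def using adj_in_colour_inj by blast
qed

lemma U_c_adj:
  "g \<in> U_c V E VX VY X Y c M N \<Longrightarrow> E z w \<Longrightarrow> E (g z) (g w)"
  using adj_in_V unfolding U_c_def tree_aut_def by blast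

lemma in_colour_U_c:
  assumes "g \<in> U_c V E VX VY X Y c M N" "E z w"
  shows "in_colour (g w) = local_action E c g z (palette_at z) (in_colour w)"
  using local_action_eq[OF _ in_colour_in_palette[OF assms(2)]] nbr_in_colour[OF assms(2)]
    U_c_adj[OF assms] adj_in_V[OF assms(2)] by simp

lemma local_action_U_c:
  "g \<in> U_c V E VX VY X Y c M N \<Longrightarrow> z \<in> V \<Longrightarrow>
    local_action E c g z (palette_at z) \<in> (if z \<in> VX then M else N)"
  using V_eq by (auto simp: U_c_def palette_at_def palette_def)

text \<open>Induction along the geodesic from \<open>\<omega>\<close>. At a vertex \<open>y\<close> with predecessor \<open>p\<close> and successor \<open>z\<close>,
  the local action \<open>\<sigma>\<close> of \<open>g\<close> at \<open>y\<close> sends the colour of \<open>p\<close> to that of \<open>g p\<close>, so once the image of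
  the arc \<open>(p, y)\<close> is known, the colour of \<open>g z\<close> ranges over a set \<open>{\<sigma> l | \<sigma>(a) = b}\<close> if \<open>y \<in> V\<^sub>X\<close>
  (finite since \<open>M\<close> is subdegree-finite), or over an orbit of \<open>N\<close> if \<open>y \<in> V\<^sub>Y\<close>.\<close>
lemma finite_U_c_stabiliser_arc_images:
  assumes M: "subgroup M (BijGroup X)" "subdegree_finite M X" and N: "all_orbits_finite N Y"
    and \<omega>: "\<omega> \<in> VY" and "E\<^sup>+\<^sup>+ \<omega> z"
  shows "\<exists>p. E p z \<and> finite ((\<lambda>g. (g p, g z)) ` {g \<in> U_c V E VX VY X Y c M N. g \<omega> = \<omega>})"
  using \<open>E\<^sup>+\<^sup>+ \<omega> z\<close>
proof (induction rule: tranclp_induct)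
  case (base z)
  let ?L = "{\<sigma> (in_colour z) | \<sigma>. \<sigma> \<in> N}"
  have \<omega>': "\<omega> \<in> V" "\<omega> \<notin> VX" using \<omega> V_eq VX_VY_disjoint by auto
  have "finite ?L"
    using N in_colour_in_palette[OF base] \<omega>'(2) by (simp add: all_orbits_finite_def palette_at_def palette_def)
  then have "finite ({\<omega>} \<times> {w. E \<omega> w \<and> in_colour w \<in> ?L})"
    by (intro finite_cartesian_product finite_adj_in_colour) simp_all
  moreover have "(\<lambda>g. (g \<omega>, g z)) ` {g \<in> U_c V E VX VY X Y c M N. g \<omega> = \<omega>}
      \<subseteq> {\<omega>} \<times> {w. E \<omega> w \<and> in_colour w \<in> ?L}"
  proof (rule image_subsetI)
    fix g assume "g \<in> {g \<in> U_c V E VX VY X Y c M N. g \<omega> = \<omega>}"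
    then have g: "g \<in> U_c V E VX VY X Y c M N" "g \<omega> = \<omega>" by simp_all
    have "in_colour (g z) \<in> ?L"
      using in_colour_U_c[OF g(1) base] local_action_U_c[OF g(1) \<omega>'(1)] \<omega>'(2) by auto
    then show "(g \<omega>, g z) \<in> {\<omega>} \<times> {w. E \<omega> w \<and> in_colour w \<in> ?L}"
      using U_c_adj[OF g(1) base] g(2) by simp
  qed
  ultimately show ?case using base by (blast intro: finite_subset)
next
  case (step y z)
  define Stab where "Stab = {g \<in> U_c V E VX VY X Y c M N. g \<omega> = \<omega>}"
  obtain p where p: "E p y" and fin: "finite ((\<lambda>g. (g p, g y)) ` Stab)"
    using step.IH unfolding Stab_def by blast
  define K where "K b = (if y \<in> VX then {\<sigma> (in_colour z) | \<sigma>. \<sigma> \<in> M \<and> \<sigma> (in_colour p) = b}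
                       else {\<sigma> (in_colour z) | \<sigma>. \<sigma> \<in> N})" for b
  define B where "B q = {snd q} \<times> {w. E (snd q) w \<and> in_colour w \<in> K (in_colour (fst q))}" for q
  have yV: "y \<in> V" using adj_in_V[OF p] by simp
  have "finite (K b)" for b
    using subdegree_finite_transporter_image[OF M] N in_colour_in_palette[OF step(2)]
      in_colour_in_palette[OF adj_sym[OF p]]
    by (cases "y \<in> VX") (simp_all add: K_def palette_at_def palette_def all_orbits_finite_def)
  then have "finite (B q)" for q by (simp add: B_def finite_adj_in_colour)
  then have "finite (\<Union>q \<in> (\<lambda>g. (g p, g y)) ` Stab. B q)" using fin by blast
  moreover have "(\<lambda>g. (g y, g z)) ` Stab \<subseteq> (\<Union>q \<in> (\<lambda>g. (g p, g y)) ` Stab. B q)"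
  proof (rule image_subsetI)
    fix g assume g: "g \<in> Stab"
    then have gU: "g \<in> U_c V E VX VY X Y c M N" by (simp add: Stab_def)
    have "in_colour (g z) \<in> K (in_colour (g p))"
      using in_colour_U_c[OF gU step(2)] in_colour_U_c[OF gU adj_sym[OF p]]
        local_action_U_c[OF gU yV] by (auto simp: K_def)
    then have "(g y, g z) \<in> B (g p, g y)" using U_c_adj[OF gU step(2)] by (simp add: B_def)
    then show "(g y, g z) \<in> (\<Union>q \<in> (\<lambda>g. (g p, g y)) ` Stab. B q)" using g by blast
  qed
  ultimately show ?case using step(2) unfolding Stab_def by (blast intro: finite_subset)
qed

lemma finite_U_c_suborbit:
  assumes "subgroup M (BijGroup X)" "subdegree_finite M X" "all_orbits_finite N Y"
    and \<omega>: "\<omega> \<in> VY" and \<alpha>: "\<alpha> \<in> V"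
  shows "finite {g \<alpha> | g. g \<in> U_c V E VX VY X Y c M N \<and> g \<omega> = \<omega>}"
proof (cases "\<alpha> = \<omega>")
  case True
  then have "{g \<alpha> | g. g \<in> U_c V E VX VY X Y c M N \<and> g \<omega> = \<omega>} \<subseteq> {\<omega>}" by blast
  then show ?thesis by (rule finite_subset) simp
next
  case False
  have "E\<^sup>*\<^sup>* \<omega> \<alpha>" using connected \<omega> \<alpha> V_eq by blast
  then have "E\<^sup>+\<^sup>+ \<omega> \<alpha>" using False by (auto dest: rtranclpD)
  then obtain p where "finite ((\<lambda>g. (g p, g \<alpha>)) ` {g \<in> U_c V E VX VY X Y c M N. g \<omega> = \<omega>})"
    using finite_U_c_stabiliser_arc_images[OF assms(1-4)] by blast
  then have "finite (snd ` (\<lambda>g. (g p, g \<alpha>)) ` {g \<in> U_c V E VX VY X Y c M N. g \<omega> = \<omega>})"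
    by (rule finite_imageI)
  moreover have "snd ` (\<lambda>g. (g p, g \<alpha>)) ` {g \<in> U_c V E VX VY X Y c M N. g \<omega> = \<omega>} =
      {g \<alpha> | g. g \<in> U_c V E VX VY X Y c M N \<and> g \<omega> = \<omega>}"
    by (auto simp: image_image)
  ultimately show ?thesis by simp
qed

subsection \<open>Suborbits of \<open>M\<close> and orbits of \<open>N\<close> inside suborbits of \<open>U\<^sub>c(M, N)\<close>\<close>

lemma VX_nonempty: "VX \<noteq> {}" and VY_nonempty: "VY \<noteq> {}"
proof -
  obtain z w where "E z w" using V_nonempty ex_adj by blast
  then show "VX \<noteq> {}" "VY \<noteq> {}" using adj_class adj_in_V V_eq by blast+
qed

lemma address_rotation_follow:
  "v \<in> V \<Longrightarrow> bij_betw f (palette_at v) (palette_at v) \<Longrightarrow> reduced v None ls \<Longrightarrow>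
    address v (rotation v f (follow v ls)) = map_alternate f True ls"
  using rotation_follow address_follow reduced_map_alternate by simp

lemma subdegree_finite_of_U_c:
  assumes M: "subgroup M (BijGroup X)" and N: "subgroup N (BijGroup Y)"
    and fin: "\<And>\<omega> \<alpha>. \<omega> \<in> VY \<Longrightarrow> \<alpha> \<in> VY \<Longrightarrow> finite {g \<alpha> | g. g \<in> U_c V E VX VY X Y c M N \<and> g \<omega> = \<omega>}"
  shows "subdegree_finite M X"
  unfolding subdegree_finite_def
proof (intro ballI)
  fix x\<^sub>0 x\<^sub>1 assume x: "x\<^sub>0 \<in> X" "x\<^sub>1 \<in> X"
  obtain u where u: "u \<in> VX" using VX_nonempty by blast
  then have uV: "u \<in> V" and palette_u: "palette_at u = X"
    using V_eq by (auto simp: palette_at_def palette_def)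
  have reduced_u: "reduced u None [x]" if "x \<in> X" for x
    using that palette_u by (simp add: reduced_Cons[OF uV])
  have follow_u: "follow u [x] \<in> VY" if "x \<in> X" for x
    using follow_in_V_class[OF uV reduced_u[OF that]] u V_eq by auto
  define \<omega> \<alpha> where "\<omega> = follow u [x\<^sub>0]" and "\<alpha> = follow u [x\<^sub>1]"
  have "{\<tau> x\<^sub>1 | \<tau>. \<tau> \<in> M \<and> \<tau> x\<^sub>0 = x\<^sub>0}
      \<subseteq> (\<lambda>\<beta>. hd (address u \<beta>)) ` {g \<alpha> | g. g \<in> U_c V E VX VY X Y c M N \<and> g \<omega> = \<omega>}"
  proof clarify
    fix \<tau> assume \<tau>: "\<tau> \<in> M" "\<tau> x\<^sub>0 = x\<^sub>0"
    then have bij: "bij_betw \<tau> (palette_at u) (palette_at u)"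
      using subgroup_BijGroup_subset[OF M] palette_u by (auto simp: Bij_def)
    have "rotation u \<tau> \<in> U_c V E VX VY X Y c M N" using rotation_in_U_c[OF M N uV] u \<tau>(1) by simp
    moreover have "rotation u \<tau> \<omega> = \<omega>"
      using rotation_follow[OF uV bij reduced_u[OF x(1)]] \<tau>(2) by (simp add: \<omega>_def)
    moreover have "hd (address u (rotation u \<tau> \<alpha>)) = \<tau> x\<^sub>1"
      using address_rotation_follow[OF uV bij reduced_u[OF x(2)]] by (simp add: \<alpha>_def)
    ultimately have "rotation u \<tau> \<alpha> \<in> {g \<alpha> | g. g \<in> U_c V E VX VY X Y c M N \<and> g \<omega> = \<omega>}"
      and "\<tau> x\<^sub>1 = hd (address u (rotation u \<tau> \<alpha>))" by auto
    then show "\<tau> x\<^sub>1 \<in> (\<lambda>\<beta>. hd (address u \<beta>)) `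
        {g \<alpha> | g. g \<in> U_c V E VX VY X Y c M N \<and> g \<omega> = \<omega>}" by (rule rev_image_eqI)
  qed
  moreover have "finite {g \<alpha> | g. g \<in> U_c V E VX VY X Y c M N \<and> g \<omega> = \<omega>}"
    using fin follow_u x by (simp add: \<omega>_def \<alpha>_def)
  ultimately show "finite {\<tau> x\<^sub>1 | \<tau>. \<tau> \<in> M \<and> \<tau> x\<^sub>0 = x\<^sub>0}" by (rule finite_surj[rotated])
qed

text \<open>Here \<open>|X| \<ge> 2\<close> is needed: it provides a vertex \<open>\<alpha>\<close> at distance two from \<open>\<omega>\<close>, and the rotations about
  \<open>\<omega>\<close> by elements of \<open>N\<close> move \<open>\<alpha>\<close> through the whole \<open>N\<close>-orbit of the colour of the middle vertex.\<close>
lemma all_orbits_finite_of_U_c: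
  assumes M: "subgroup M (BijGroup X)" and N: "subgroup N (BijGroup Y)" and X: "\<exists>a\<in>X. \<exists>b\<in>X. a \<noteq> b"
    and fin: "\<And>\<omega> \<alpha>. \<omega> \<in> VY \<Longrightarrow> \<alpha> \<in> VY \<Longrightarrow> finite {g \<alpha> | g. g \<in> U_c V E VX VY X Y c M N \<and> g \<omega> = \<omega>}"
  shows "all_orbits_finite N Y"
  unfolding all_orbits_finite_def
proof
  fix y assume y: "y \<in> Y"
  obtain \<omega> where \<omega>: "\<omega> \<in> VY" using VY_nonempty by blast
  then have \<omega>V: "\<omega> \<in> V" and \<omega>X: "\<omega> \<notin> VX" and palette_\<omega>: "palette_at \<omega> = Y"
    using V_eq VX_VY_disjoint by (auto simp: palette_at_def palette_def)
  obtain x where x: "x \<in> X" "x \<noteq> in_colour \<omega>" using X by metis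
  have reduced_yx: "reduced \<omega> None [y', x]" if "y' \<in> Y" for y'
    using that x palette_\<omega> nbr_in_V[OF \<omega>V] nbr_class[OF \<omega>V] \<omega>X
    by (simp add: reduced_Cons[OF \<omega>V] reduced_Cons[OF nbr_in_V[OF \<omega>V]] palette_at_def palette_def)
  define \<alpha> where "\<alpha> = follow \<omega> [y, x]"
  have \<alpha>: "\<alpha> \<in> VY" using follow_in_V_class[OF \<omega>V reduced_yx[OF y]] \<omega>X V_eq by (auto simp: \<alpha>_def)
  have "{\<sigma> y | \<sigma>. \<sigma> \<in> N}
      \<subseteq> (\<lambda>\<beta>. hd (address \<omega> \<beta>)) ` {g \<alpha> | g. g \<in> U_c V E VX VY X Y c M N \<and> g \<omega> = \<omega>}"
  proof clarify
    fix \<sigma> assume \<sigma>: "\<sigma> \<in> N"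
    then have bij: "bij_betw \<sigma> (palette_at \<omega>) (palette_at \<omega>)"
      using subgroup_BijGroup_subset[OF N] palette_\<omega> by (auto simp: Bij_def)
    have "rotation \<omega> \<sigma> \<in> U_c V E VX VY X Y c M N" using rotation_in_U_c[OF M N \<omega>V] \<omega>X \<sigma> by simp
    moreover have "rotation \<omega> \<sigma> \<omega> = \<omega>" using rotation_root[OF \<omega>V bij] .
    moreover have "hd (address \<omega> (rotation \<omega> \<sigma> \<alpha>)) = \<sigma> y"
      using address_rotation_follow[OF \<omega>V bij reduced_yx[OF y]] by (simp add: \<alpha>_def)
    ultimately have "rotation \<omega> \<sigma> \<alpha> \<in> {g \<alpha> | g. g \<in> U_c V E VX VY X Y c M N \<and> g \<omega> = \<omega>}"
      and "\<sigma> y = hd (address \<omega> (rotation \<omega> \<sigma> \<alpha>))" by auto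
    then show "\<sigma> y \<in> (\<lambda>\<beta>. hd (address \<omega> \<beta>)) `
        {g \<alpha> | g. g \<in> U_c V E VX VY X Y c M N \<and> g \<omega> = \<omega>}" by (rule rev_image_eqI)
  qed
  then show "finite {\<sigma> y | \<sigma>. \<sigma> \<in> N}" by (rule finite_surj[OF fin[OF \<omega> \<alpha>]])
qed

end

lemma box_product_suborbit:
  assumes "\<omega> \<in> VY" "\<alpha> \<in> VY"
  shows "{h \<alpha> | h. h \<in> box_product V E VX VY X Y c M N \<and> h \<omega> = \<omega>} =
    {g \<alpha> | g. g \<in> U_c V E VX VY X Y c M N \<and> g \<omega> = \<omega>}"
proof (intro equalityI subsetI)
  fix x assume "x \<in> {h \<alpha> | h. h \<in> box_product V E VX VY X Y c M N \<and> h \<omega> = \<omega>}"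
  then obtain g where "g \<in> U_c V E VX VY X Y c M N" "restrict g VY \<omega> = \<omega>" "x = restrict g VY \<alpha>"
    by (auto simp: box_product_def)
  then show "x \<in> {g \<alpha> | g. g \<in> U_c V E VX VY X Y c M N \<and> g \<omega> = \<omega>}" using assms by auto
next
  fix x assume "x \<in> {g \<alpha> | g. g \<in> U_c V E VX VY X Y c M N \<and> g \<omega> = \<omega>}"
  then obtain g where g: "g \<in> U_c V E VX VY X Y c M N" "g \<omega> = \<omega>" "x = g \<alpha>" by blast
  then have "restrict g VY \<in> box_product V E VX VY X Y c M N" by (simp add: box_product_def)
  moreover have "restrict g VY \<omega> = \<omega>" "x = restrict g VY \<alpha>" using g assms by simp_all
  ultimately show "x \<in> {h \<alpha> | h. h \<in> box_product V E VX VY X Y c M N \<and> h \<omega> = \<omega>}" by blast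
qed

theorem proposition5p2:
  fixes X Y :: "'c set" and M N :: "('c \<Rightarrow> 'c) set"
    and V VX VY :: "'v set" and E :: "'v \<Rightarrow> 'v \<Rightarrow> bool" and c :: "'v \<times> 'v \<Rightarrow> 'c"
  assumes "X \<inter> Y = {}"
    and "\<exists>a\<in>X. \<exists>b\<in>X. a \<noteq> b" and "\<exists>a\<in>Y. \<exists>b\<in>Y. a \<noteq> b"
    and "subgroup M (BijGroup X)" and "M \<noteq> {\<one>\<^bsub>BijGroup X\<^esub>}"
    and "subgroup N (BijGroup Y)" and "N \<noteq> {\<one>\<^bsub>BijGroup Y\<^esub>}"
    and "biregular_tree V E VX VY X Y"
    and "legal_colouring E VX VY X Y c"
  shows "subdegree_finite (box_product V E VX VY X Y c M N) VY
     \<longleftrightarrow> subdegree_finite M X \<and> all_orbits_finite N Y"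
proof -
  interpret legally_coloured_tree X Y V VX VY E c
    using assms(2,3,8,9) by unfold_locales auto
  have "subdegree_finite (box_product V E VX VY X Y c M N) VY \<longleftrightarrow>
      (\<forall>\<omega>\<in>VY. \<forall>\<alpha>\<in>VY. finite {g \<alpha> | g. g \<in> U_c V E VX VY X Y c M N \<and> g \<omega> = \<omega>})"
    by (simp add: subdegree_finite_def box_product_suborbit)
  then show ?thesis
    using subdegree_finite_of_U_c[OF assms(4,6)] all_orbits_finite_of_U_c[OF assms(4,6,2)]
      finite_U_c_suborbit[OF assms(4)] V_eq by blast
qed

end
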